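(* Let $a\in\mathbb{R}$, $b\in(a,\infty)$, $h\in\mathbb{N}$, $v_1,\dots,v_h,w_1,\dots,w_h\in(0,\infty)$, let $f,p\in C(\mathbb{R},\mathbb{R})$ satisfy for all $x\in\mathbb{R}$ that $p(x)\ge0$ and $p^{-1}((0,\infty))=(a,b)$, with $\mathcal{N}^\theta$, $\mathcal{L}$, $I_i^\theta$, $\operatorname{Lip}$ as in the context. Assume that $f$ is non-decreasing and satisfies $\operatorname{Lip}(f)<\min_{i\in\{1,\dots,h\}}v_iw_i$, let $\vartheta\in\mathbb{R}^{h+1}$ satisfy $(\nabla\mathcal{L})(\vartheta)=0$, and let $V=\sup_{x\in(a,b)}\sum_{i\in\{1,\dots,h\},\,x\in I_i^\vartheta}v_i$. Then $$\max\{\mathcal{N}^\vartheta(b)-f(b),\,f(a)-\mathcal{N}^\vartheta(a)\}\le V.$$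
   Context: Let $\mathfrak{c}(x)=\min\{\max\{x,0\},1\}$. For $F\in C(\mathbb{R},\mathbb{R})$ let $\operatorname{Lip}(F)=\sup_{x,y\in[a,b],x\ne y}\frac{|F(x)-F(y)|}{|x-y|}$. For $\theta=(\theta_1,\dots,\theta_{h+1})\in\mathbb{R}^{h+1}$ and $i\in\{1,\dots,h\}$ let $\psi_i(\theta)=-[w_i]^{-1}\theta_i$, $I_i^\theta=(\psi_i(\theta),\psi_i(\theta)+[w_i]^{-1})\cap(a,b)$, $\mathcal{N}^\theta(x)=\theta_{h+1}+\sum_{i=1}^hv_i\mathfrak{c}(w_ix+\theta_i)$, and $\mathcal{L}(\theta)=\int_a^b(\mathcal{N}^\theta(x)-f(x))^2p(x)\,\mathrm{d}x$ ($\mathcal{L}$ is continuously differentiable). *)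

theory Defs
  imports "HOL-Analysis.Analysis" "HOL-Library.Extended_Real"
begin

definition clip :: "real \<Rightarrow> real" where
  "clip x = min (max x 0) 1"

text \<open>Lipschitz constant of F on [a,b] (may be infinite, hence ereal).\<close>
definition Lip :: "real \<Rightarrow> real \<Rightarrow> (real \<Rightarrow> real) \<Rightarrow> ereal" where
  "Lip a b F = (SUP xy \<in> {(x, y). x \<in> {a..b} \<and> y \<in> {a..b} \<and> x \<noteq> y}.
       ereal (\<bar>F (fst xy) - F (snd xy)\<bar> / \<bar>fst xy - snd xy\<bar>))"

text \<open>Parameter vectors theta in R^(h+1) are functions nat => real, only
  the coordinates 1..h+1 are relevant.\<close>
definition psi :: "(nat \<Rightarrow> real) \<Rightarrow> (nat \<Rightarrow> real) \<Rightarrow> nat \<Rightarrow> real" where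
  "psi w \<theta> i = - (\<theta> i / w i)"

definition Iset :: "real \<Rightarrow> real \<Rightarrow> (nat \<Rightarrow> real) \<Rightarrow> (nat \<Rightarrow> real) \<Rightarrow> nat \<Rightarrow> real set" where
  "Iset a b w \<theta> i = {psi w \<theta> i <..< psi w \<theta> i + 1 / w i} \<inter> {a<..<b}"

definition NN :: "nat \<Rightarrow> (nat \<Rightarrow> real) \<Rightarrow> (nat \<Rightarrow> real) \<Rightarrow> (nat \<Rightarrow> real) \<Rightarrow> real \<Rightarrow> real" where
  "NN h v w \<theta> x = \<theta> (h + 1) + (\<Sum>i = 1..h. v i * clip (w i * x + \<theta> i))"

definition LL :: "real \<Rightarrow> real \<Rightarrow> nat \<Rightarrow> (nat \<Rightarrow> real) \<Rightarrow> (nat \<Rightarrow> real)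
    \<Rightarrow> (real \<Rightarrow> real) \<Rightarrow> (real \<Rightarrow> real) \<Rightarrow> (nat \<Rightarrow> real) \<Rightarrow> real" where
  "LL a b h v w f p \<theta> = integral {a..b} (\<lambda>x. (NN h v w \<theta> x - f x)\<^sup>2 * p x)"

definition grad_zero :: "nat \<Rightarrow> ((nat \<Rightarrow> real) \<Rightarrow> real) \<Rightarrow> (nat \<Rightarrow> real) \<Rightarrow> bool" where
  "grad_zero h L \<theta> \<longleftrightarrow>
     (\<forall>j \<in> {1..h+1}. ((\<lambda>t. L (\<theta>(j := t))) has_real_derivative 0) (at (\<theta> j)))"

end

(* Write r = N - f for the residual of the network at the critical point theta.  If r had a
   strict sign on the whole part of (a,b) where some parameter acts on N, shifting that parameter
   by s against r would change the loss by 2 * integral (r * Delta * p) + O(s^2), with a linear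
   term of order -s; this contradicts the vanishing partial derivative.  Applied to the output bias
   and to the offset of the active neuron whose breakpoint psi_i is rightmost, this yields a point
   y in (a,b) to the right of every active breakpoint with N(y) <= f(y).  Between y and b only the
   neurons active at y can still raise N, each by at most v_i, while f(y) <= f(b); hence
   N(b) - f(b) <= N(b) - N(y) <= V.  The bound for f(a) - N(a) is symmetric. *)

theory Submission
  imports Defs
begin

lemma deriv_zero_not_linear_descent:
  fixes \<phi> :: "real \<Rightarrow> real"
  assumes der: "(\<phi> has_real_derivative 0) (at t)" and c: "c > 0" and \<delta>: "\<delta> > 0"
    and descent: "\<And>s. s \<in> {0<..<\<delta>} \<Longrightarrow> \<phi> (t + \<sigma> * s) - \<phi> t \<le> - c * s + K * s\<^sup>2"
  shows False
proof -
  have "((\<lambda>s. \<phi> (t + \<sigma> * s)) has_real_derivative 0 * \<sigma>) (at 0)"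
    by (rule DERIV_chain2[of \<phi>]) (use der in \<open>auto intro!: derivative_eq_intros\<close>)
  then have "((\<lambda>s. (\<phi> (t + \<sigma> * s) - \<phi> t) / s) \<longlongrightarrow> 0) (at 0)"
    unfolding has_field_derivative_iff by simp
  then have quotient: "((\<lambda>s. (\<phi> (t + \<sigma> * s) - \<phi> t) / s) \<longlongrightarrow> 0) (at_right 0)"
    by (rule tendsto_within_subset) simp
  have bound: "((\<lambda>s. - c + K * s) \<longlongrightarrow> - c) (at_right 0)"
    by (auto intro!: tendsto_eq_intros)
  have "(\<phi> (t + \<sigma> * s) - \<phi> t) / s \<le> - c + K * s" if s: "s \<in> {0<..<\<delta>}" for s
  proof -
    have "\<phi> (t + \<sigma> * s) - \<phi> t \<le> (- c + K * s) * s"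
      using descent[OF s] by (simp add: power2_eq_square algebra_simps)
    then show ?thesis using s by (simp add: pos_divide_le_eq)
  qed
  then have "\<forall>\<^sub>F s in at_right 0. (\<phi> (t + \<sigma> * s) - \<phi> t) / s \<le> - c + K * s"
    unfolding eventually_at_right_field using \<delta> by (auto intro!: exI[of _ \<delta>])
  then have "0 \<le> - c"
    by (rule tendsto_le[OF trivial_limit_at_right_real bound quotient])
  then show False using c by simp
qed

lemma integral_perturbed_square_le:
  fixes g d p :: "real \<Rightarrow> real"
  assumes cont: "continuous_on {a..b} g" "continuous_on {a..b} d" "continuous_on {a..b} p"
    and p: "\<And>x. x \<in> {a..b} \<Longrightarrow> 0 \<le> p x"
    and sign: "\<And>x. x \<in> {a..b} \<Longrightarrow> g x * d x * p x \<le> 0"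
    and k: "k1 \<le> k2" "{k1..k2} \<subseteq> {a..b}"
    and strict: "\<And>x. x \<in> {k1..k2} \<Longrightarrow> g x * d x * p x \<le> - m"
    and bound: "\<And>x. x \<in> {a..b} \<Longrightarrow> \<bar>d x\<bar> \<le> e"
  shows "integral {a..b} (\<lambda>x. (g x + d x)\<^sup>2 * p x) - integral {a..b} (\<lambda>x. (g x)\<^sup>2 * p x)
           \<le> - 2 * m * (k2 - k1) + e\<^sup>2 * integral {a..b} p"
proof -
  have int: "F integrable_on {a..b}" if "continuous_on {a..b} F" for F :: "real \<Rightarrow> real"
    using integrable_continuous_interval that by blast
  have int_k: "(\<lambda>x. - (g x * d x * p x)) integrable_on {k1..k2}"
    by (intro integrable_continuous_interval continuous_intros continuous_on_subset[OF _ k(2)] cont)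
  have "integral {a..b} (\<lambda>x. (g x + d x)\<^sup>2 * p x) - integral {a..b} (\<lambda>x. (g x)\<^sup>2 * p x)
      = integral {a..b} (\<lambda>x. 2 * (g x * d x * p x) + (d x)\<^sup>2 * p x)"
    by (subst integral_diff[symmetric]) (auto intro!: int continuous_intros cont integral_cong
        simp: power2_eq_square algebra_simps)
  also have "\<dots> = 2 * integral {a..b} (\<lambda>x. g x * d x * p x) + integral {a..b} (\<lambda>x. (d x)\<^sup>2 * p x)"
    by (subst integral_add) (auto intro!: int continuous_intros cont)
  finally have split: "integral {a..b} (\<lambda>x. (g x + d x)\<^sup>2 * p x) - integral {a..b} (\<lambda>x. (g x)\<^sup>2 * p x)
      = 2 * integral {a..b} (\<lambda>x. g x * d x * p x) + integral {a..b} (\<lambda>x. (d x)\<^sup>2 * p x)" .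
  have "integral {k1..k2} (\<lambda>x. - (g x * d x * p x)) \<le> integral {a..b} (\<lambda>x. - (g x * d x * p x))"
  proof (rule integral_subset_le[OF k(2) int_k])
    show "(\<lambda>x. - (g x * d x * p x)) integrable_on {a..b}"
      by (intro int continuous_intros cont)
    show "\<forall>x\<in>{a..b}. 0 \<le> - (g x * d x * p x)"
      using sign by simp
  qed
  moreover have "(k2 - k1) * m \<le> integral {k1..k2} (\<lambda>x. - (g x * d x * p x))"
  proof -
    have "integral {k1..k2} (\<lambda>x. m) \<le> integral {k1..k2} (\<lambda>x. - (g x * d x * p x))"
    proof (rule integral_le[OF _ int_k])
      show "m \<le> - (g x * d x * p x)" if "x \<in> {k1..k2}" for x
        using strict[OF that] by linarith
    qed (rule integrable_const_ivl)
    then show ?thesis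
      using k(1) by simp
  qed
  ultimately have linear: "integral {a..b} (\<lambda>x. g x * d x * p x) \<le> - ((k2 - k1) * m)"
    unfolding integral_neg by linarith
  have "integral {a..b} (\<lambda>x. (d x)\<^sup>2 * p x) \<le> integral {a..b} (\<lambda>x. e\<^sup>2 * p x)"
  proof (intro integral_le int continuous_intros cont)
    fix x assume x: "x \<in> {a..b}"
    have "(d x)\<^sup>2 \<le> e\<^sup>2"
      using power_mono[OF bound[OF x] abs_ge_zero, of 2] by simp
    then show "(d x)\<^sup>2 * p x \<le> e\<^sup>2 * p x" using p[OF x] by (rule mult_right_mono)
  qed
  then have quadratic: "integral {a..b} (\<lambda>x. (d x)\<^sup>2 * p x) \<le> e\<^sup>2 * integral {a..b} p"
    by simp
  have "- 2 * m * (k2 - k1) = - 2 * ((k2 - k1) * m)"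
    by simp
  then show ?thesis
    using split linear quadratic by linarith
qed

lemma continuous_interval_ge_half:
  fixes q :: "real \<Rightarrow> real"
  assumes q: "continuous_on U q" and U: "open U" "y \<in> U" and pos: "q y > 0"
  obtains k1 k2 where "k1 < k2" "{k1..k2} \<subseteq> U" "\<And>x. x \<in> {k1..k2} \<Longrightarrow> q y / 2 \<le> q x"
proof -
  obtain \<epsilon> where \<epsilon>: "\<epsilon> > 0" "ball y \<epsilon> \<subseteq> U"
    using U openE by blast
  obtain \<delta> where \<delta>: "\<delta> > 0" "\<And>x. x \<in> U \<Longrightarrow> dist x y < \<delta> \<Longrightarrow> dist (q x) (q y) < q y / 2"
    using q U(2) pos unfolding continuous_on_iff by (metis half_gt_zero)
  define r where "r = min \<epsilon> \<delta>"
  have r_U: "x \<in> U" if "dist x y < r" for x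
    using that \<epsilon>(2) by (auto simp: r_def dist_commute)
  have r_q: "q y / 2 < q x" if "dist x y < r" for x
  proof -
    have "dist (q x) (q y) < q y / 2"
      using \<delta>(2)[OF r_U[OF that]] that by (simp add: r_def)
    then show ?thesis
      unfolding dist_real_def abs_diff_less_iff by linarith
  qed
  have r: "r > 0" "\<And>x. dist x y < r \<Longrightarrow> x \<in> U \<and> q y / 2 < q x"
    using \<epsilon>(1) \<delta>(1) r_U r_q by (auto simp: r_def)
  show thesis
  proof (rule that[of "y - r / 2" "y + r / 2"])
    show "y - r / 2 < y + r / 2" using r by simp
    show "{y - r / 2..y + r / 2} \<subseteq> U" using r by (auto simp: dist_real_def)
    show "q y / 2 \<le> q x" if "x \<in> {y - r / 2..y + r / 2}" for x
    proof -
      have "dist x y < r"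
        using that r(1) unfolding dist_real_def abs_diff_less_iff by auto
      then show ?thesis
        using r(2) by fastforce
    qed
  qed
qed

lemma clip_mono: "x \<le> y \<Longrightarrow> clip x \<le> clip y"
  unfolding clip_def by auto

lemma clip_lipschitz: "\<bar>clip x - clip y\<bar> \<le> \<bar>x - y\<bar>"
  unfolding clip_def by auto

lemma clip_eq_0: "x \<le> 0 \<Longrightarrow> clip x = 0"
  unfolding clip_def by auto

lemma clip_eq_1: "1 \<le> x \<Longrightarrow> clip x = 1"
  unfolding clip_def by auto

lemma clip_eq_self: "0 \<le> x \<Longrightarrow> x \<le> 1 \<Longrightarrow> clip x = x"
  unfolding clip_def by auto

lemma clip_nonneg: "0 \<le> clip x"
  and clip_le_1: "clip x \<le> 1"
  unfolding clip_def by auto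

lemma continuous_on_clip [continuous_intros]:
  "continuous_on S F \<Longrightarrow> continuous_on S (\<lambda>x. clip (F x))"
  unfolding clip_def by (intro continuous_intros)

lemma continuous_on_NN: "continuous_on S (NN h v w \<theta>)"
  unfolding NN_def by (intro continuous_intros)

lemma NN_fun_upd_neuron:
  assumes j: "j \<in> {1..h}"
  shows "NN h v w (\<theta>(j := t)) x = NN h v w \<theta> x + v j * (clip (w j * x + t) - clip (w j * x + \<theta> j))"
proof -
  have "(\<Sum>i = 1..h. v i * clip (w i * x + (\<theta>(j := t)) i)) - (\<Sum>i = 1..h. v i * clip (w i * x + \<theta> i))
      = (\<Sum>i = 1..h. if i = j then v j * (clip (w j * x + t) - clip (w j * x + \<theta> j)) else 0)"
    unfolding sum_subtractf[symmetric] by (rule sum.cong) (auto simp: algebra_simps)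
  also have "\<dots> = v j * (clip (w j * x + t) - clip (w j * x + \<theta> j))"
    using j by simp
  finally show ?thesis
    using j unfolding NN_def by simp
qed

lemma NN_fun_upd_bias: "NN h v w (\<theta>(h + 1 := t)) x = NN h v w \<theta> x + (t - \<theta> (h + 1))"
proof -
  have "(\<Sum>i = 1..h. v i * clip (w i * x + (\<theta>(h + 1 := t)) i)) = (\<Sum>i = 1..h. v i * clip (w i * x + \<theta> i))"
    by (rule sum.cong) auto
  then show ?thesis unfolding NN_def by simp
qed

lemma NN_diff:
  "NN h v w \<theta> x - NN h v w \<theta> y = (\<Sum>i = 1..h. v i * (clip (w i * x + \<theta> i) - clip (w i * y + \<theta> i)))"
  unfolding NN_def by (simp add: sum_subtractf[symmetric] algebra_simps)

lemma psi_less_iff: "w i > 0 \<Longrightarrow> psi w \<theta> i < x \<longleftrightarrow> 0 < w i * x + \<theta> i"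
  unfolding psi_def by (auto simp: field_simps)

lemma less_psi_add_iff: "w i > 0 \<Longrightarrow> x < psi w \<theta> i + 1 / w i \<longleftrightarrow> w i * x + \<theta> i < 1"
  unfolding psi_def by (auto simp: field_simps)

lemma mem_Iset_iff:
  "w i > 0 \<Longrightarrow> x \<in> Iset a b w \<theta> i \<longleftrightarrow> x \<in> {a<..<b} \<and> 0 < w i * x + \<theta> i \<and> w i * x + \<theta> i < 1"
  unfolding Iset_def by (auto simp: psi_less_iff less_psi_add_iff)

lemma open_Iset: "open (Iset a b w \<theta> i)"
  unfolding Iset_def by (intro open_Int open_greaterThanLessThan)

lemma Iset_subset: "Iset a b w \<theta> i \<subseteq> {a<..<b}"
  unfolding Iset_def by blast

lemma Iset_eq_empty_iff:
  assumes "w i > 0" "a < b"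
  shows "Iset a b w \<theta> i = {} \<longleftrightarrow> b \<le> psi w \<theta> i \<or> psi w \<theta> i + 1 / w i \<le> a"
proof -
  have "0 < 1 / w i" using assms(1) by simp
  then show ?thesis
    unfolding Iset_def using assms(2) by (auto simp: min_le_iff_disj le_max_iff_disj)
qed

lemma clip_rise_right_le:
  assumes wi: "w i > 0" and y: "y \<in> {a<..<b}"
    and active: "Iset a b w \<theta> i \<noteq> {} \<Longrightarrow> psi w \<theta> i < y"
  shows "clip (w i * b + \<theta> i) - clip (w i * y + \<theta> i) \<le> (if y \<in> Iset a b w \<theta> i then 1 else 0)"
proof (cases "y \<in> Iset a b w \<theta> i")
  case True
  then show ?thesis using clip_le_1 clip_nonneg by (smt (verit))
next
  case False
  then consider "1 \<le> w i * y + \<theta> i" | "w i * y + \<theta> i \<le> 0"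
    using y by (force simp: mem_Iset_iff[of w i, OF wi])
  then show ?thesis
  proof cases
    case 1
    moreover have "w i * y < w i * b" using wi y by simp
    ultimately show ?thesis using False by (simp add: clip_eq_1)
  next
    case 2
    have "a < y" "y < b"
      using y by auto
    have y_le: "y \<le> psi w \<theta> i"
      using 2 psi_less_iff[of w i \<theta> y, OF wi] by linarith
    then have "Iset a b w \<theta> i = {}"
      using active by fastforce
    moreover have "a < psi w \<theta> i + 1 / w i"
      using \<open>a < y\<close> y_le wi by (smt (verit) divide_pos_pos)
    ultimately have "b \<le> psi w \<theta> i"
      using Iset_eq_empty_iff[of w i a b \<theta>, OF wi] \<open>a < y\<close> \<open>y < b\<close> by auto
    then have "w i * b + \<theta> i \<le> 0" using psi_less_iff[of w i \<theta> b, OF wi] by linarith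
    then show ?thesis using False 2 by (simp add: clip_eq_0)
  qed
qed

lemma clip_rise_left_le:
  assumes wi: "w i > 0" and y: "y \<in> {a<..<b}"
    and active: "Iset a b w \<theta> i \<noteq> {} \<Longrightarrow> y < psi w \<theta> i + 1 / w i"
  shows "clip (w i * y + \<theta> i) - clip (w i * a + \<theta> i) \<le> (if y \<in> Iset a b w \<theta> i then 1 else 0)"
proof (cases "y \<in> Iset a b w \<theta> i")
  case True
  then show ?thesis using clip_le_1 clip_nonneg by (smt (verit))
next
  case False
  then consider "w i * y + \<theta> i \<le> 0" | "1 \<le> w i * y + \<theta> i"
    using y by (force simp: mem_Iset_iff[of w i, OF wi])
  then show ?thesis
  proof cases
    case 1
    moreover have "w i * a < w i * y" using wi y by simp
    ultimately show ?thesis using False by (simp add: clip_eq_0)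
  next
    case 2
    have "a < y" "y < b"
      using y by auto
    have y_ge: "psi w \<theta> i + 1 / w i \<le> y"
      using 2 less_psi_add_iff[of w i y \<theta>, OF wi] by linarith
    then have "Iset a b w \<theta> i = {}"
      using active by fastforce
    moreover have "psi w \<theta> i < b"
      using \<open>y < b\<close> y_ge wi by (smt (verit) divide_pos_pos)
    ultimately have "psi w \<theta> i + 1 / w i \<le> a"
      using Iset_eq_empty_iff[of w i a b \<theta>, OF wi] \<open>a < y\<close> \<open>y < b\<close> by auto
    then have "1 \<le> w i * a + \<theta> i" using less_psi_add_iff[of w i a \<theta>, OF wi] by linarith
    then show ?thesis using False 2 by (simp add: clip_eq_1)
  qed
qed

lemma NN_rise_right_le:
  assumes vpos: "\<forall>i \<in> {1..h}. v i > 0" and wpos: "\<forall>i \<in> {1..h}. w i > 0" and y: "y \<in> {a<..<b}"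
    and active: "\<forall>i \<in> {1..h}. Iset a b w \<theta> i \<noteq> {} \<longrightarrow> psi w \<theta> i < y"
  shows "NN h v w \<theta> b - NN h v w \<theta> y \<le> (\<Sum>i \<in> {i \<in> {1..h}. y \<in> Iset a b w \<theta> i}. v i)"
proof -
  have "v i * (clip (w i * b + \<theta> i) - clip (w i * y + \<theta> i)) \<le> (if y \<in> Iset a b w \<theta> i then v i else 0)"
    if i: "i \<in> {1..h}" for i
  proof -
    have diff: "clip (w i * b + \<theta> i) - clip (w i * y + \<theta> i) \<le> (if y \<in> Iset a b w \<theta> i then 1 else 0)"
      using i wpos active y by (intro clip_rise_right_le) auto
    have "0 \<le> v i"
      using i vpos by fastforce
    then show ?thesis
      using diff by (cases "y \<in> Iset a b w \<theta> i") (auto simp: mult_left_le mult_nonneg_nonpos)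
  qed
  then have "NN h v w \<theta> b - NN h v w \<theta> y \<le> (\<Sum>i = 1..h. if y \<in> Iset a b w \<theta> i then v i else 0)"
    unfolding NN_diff by (intro sum_mono)
  also have "\<dots> = (\<Sum>i \<in> {i \<in> {1..h}. y \<in> Iset a b w \<theta> i}. v i)"
    by (rule sum.inter_filter[symmetric]) simp
  finally show ?thesis .
qed

lemma NN_rise_left_le:
  assumes vpos: "\<forall>i \<in> {1..h}. v i > 0" and wpos: "\<forall>i \<in> {1..h}. w i > 0" and y: "y \<in> {a<..<b}"
    and active: "\<forall>i \<in> {1..h}. Iset a b w \<theta> i \<noteq> {} \<longrightarrow> y < psi w \<theta> i + 1 / w i"
  shows "NN h v w \<theta> y - NN h v w \<theta> a \<le> (\<Sum>i \<in> {i \<in> {1..h}. y \<in> Iset a b w \<theta> i}. v i)"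
proof -
  have "v i * (clip (w i * y + \<theta> i) - clip (w i * a + \<theta> i)) \<le> (if y \<in> Iset a b w \<theta> i then v i else 0)"
    if i: "i \<in> {1..h}" for i
  proof -
    have diff: "clip (w i * y + \<theta> i) - clip (w i * a + \<theta> i) \<le> (if y \<in> Iset a b w \<theta> i then 1 else 0)"
      using i wpos active y by (intro clip_rise_left_le) auto
    have "0 \<le> v i"
      using i vpos by fastforce
    then show ?thesis
      using diff by (cases "y \<in> Iset a b w \<theta> i") (auto simp: mult_left_le mult_nonneg_nonpos)
  qed
  then have "NN h v w \<theta> y - NN h v w \<theta> a \<le> (\<Sum>i = 1..h. if y \<in> Iset a b w \<theta> i then v i else 0)"
    unfolding NN_diff by (intro sum_mono)
  also have "\<dots> = (\<Sum>i \<in> {i \<in> {1..h}. y \<in> Iset a b w \<theta> i}. v i)"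
    by (rule sum.inter_filter[symmetric]) simp
  finally show ?thesis .
qed

locale loss_critical_point =
  fixes a b :: real and h :: nat and v w :: "nat \<Rightarrow> real"
    and f p :: "real \<Rightarrow> real" and \<theta> :: "nat \<Rightarrow> real"
  assumes ab: "a < b"
    and vpos: "\<forall>i \<in> {1..h}. v i > 0"
    and wpos: "\<forall>i \<in> {1..h}. w i > 0"
    and fcont: "continuous_on UNIV f"
    and pcont: "continuous_on UNIV p"
    and pnonneg: "\<forall>x. p x \<ge> 0"
    and psupp: "{x. p x > 0} = {a<..<b}"
    and crit: "grad_zero h (LL a b h v w f p) \<theta>"
begin

definition residual :: "real \<Rightarrow> real" where
  "residual x = NN h v w \<theta> x - f x"

lemma p_eq_0_outside: "x \<notin> {a<..<b} \<Longrightarrow> p x = 0"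
  using psupp pnonneg by (metis mem_Collect_eq order_le_less)

lemma p_pos_inside: "x \<in> {a<..<b} \<Longrightarrow> p x > 0"
  using psupp by blast

lemma continuous_on_p: "continuous_on S p"
  using continuous_on_subset[OF pcont] by blast

lemma continuous_on_residual: "continuous_on S residual"
  unfolding residual_def
  by (intro continuous_intros continuous_on_NN continuous_on_subset[OF fcont]) auto

lemma signed_residual_interval:
  assumes U: "open U" "U \<subseteq> {a<..<b}" and y0: "y0 \<in> U" and pos: "\<sigma> * residual y0 > 0"
  obtains k1 k2 m where "k1 < k2" "{k1..k2} \<subseteq> U" "m > 0"
    "\<And>x. x \<in> {k1..k2} \<Longrightarrow> m \<le> \<sigma> * residual x * p x"
proof -
  have cont: "continuous_on U (\<lambda>x. \<sigma> * residual x * p x)"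
    by (intro continuous_intros continuous_on_residual continuous_on_p)
  have pos': "\<sigma> * residual y0 * p y0 > 0"
    using pos p_pos_inside y0 U(2) by auto
  obtain k1 k2 where k: "k1 < k2" "{k1..k2} \<subseteq> U"
    and q: "\<And>x. x \<in> {k1..k2} \<Longrightarrow> \<sigma> * residual y0 * p y0 / 2 \<le> \<sigma> * residual x * p x"
    using continuous_interval_ge_half[of U "\<lambda>x. \<sigma> * residual x * p x" y0, OF cont U(1) y0 pos']
    by blast
  show thesis
    by (rule that[OF k(1) k(2) _ q]) (use pos' in simp)
qed

lemma no_first_order_descent:
  assumes j: "j \<in> {1..h+1}" and s0: "s0 > 0" and k: "k1 < k2" "{k1..k2} \<subseteq> {a..b}" and m: "m > 0"
    and sign: "\<And>s x. s \<in> {0<..<s0} \<Longrightarrow> x \<in> {a<..<b} \<Longrightarrow>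
      residual x * (NN h v w (\<theta>(j := \<theta> j + \<sigma> * s)) x - NN h v w \<theta> x) \<le> 0"
    and strict: "\<And>s x. s \<in> {0<..<s0} \<Longrightarrow> x \<in> {k1..k2} \<Longrightarrow>
      residual x * (NN h v w (\<theta>(j := \<theta> j + \<sigma> * s)) x - NN h v w \<theta> x) * p x \<le> - m * s"
    and bound: "\<And>s x. s \<in> {0<..<s0} \<Longrightarrow> x \<in> {a..b} \<Longrightarrow>
      \<bar>NN h v w (\<theta>(j := \<theta> j + \<sigma> * s)) x - NN h v w \<theta> x\<bar> \<le> C * s"
  shows False
proof -
  define \<Delta> where "\<Delta> s x = NN h v w (\<theta>(j := \<theta> j + \<sigma> * s)) x - NN h v w \<theta> x" for s x
  define P where "P = integral {a..b} p"
  have "LL a b h v w f p (\<theta>(j := \<theta> j + \<sigma> * s)) - LL a b h v w f p \<theta>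
      \<le> - (2 * m * (k2 - k1)) * s + C\<^sup>2 * P * s\<^sup>2" if s: "s \<in> {0<..<s0}" for s
  proof -
    have "LL a b h v w f p (\<theta>(j := \<theta> j + \<sigma> * s)) = integral {a..b} (\<lambda>x. (residual x + \<Delta> s x)\<^sup>2 * p x)"
      unfolding LL_def residual_def \<Delta>_def by simp
    moreover have "LL a b h v w f p \<theta> = integral {a..b} (\<lambda>x. (residual x)\<^sup>2 * p x)"
      unfolding LL_def residual_def ..
    moreover have "integral {a..b} (\<lambda>x. (residual x + \<Delta> s x)\<^sup>2 * p x) - integral {a..b} (\<lambda>x. (residual x)\<^sup>2 * p x)
        \<le> - 2 * (m * s) * (k2 - k1) + (C * s)\<^sup>2 * P"
      unfolding P_def
    proof (rule integral_perturbed_square_le)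
      show "continuous_on {a..b} (\<Delta> s)"
        unfolding \<Delta>_def by (intro continuous_intros continuous_on_NN)
      show "residual x * \<Delta> s x * p x \<le> 0" if "x \<in> {a..b}" for x
      proof (cases "x \<in> {a<..<b}")
        case True
        then show ?thesis
          using sign[OF s True] pnonneg by (simp add: \<Delta>_def mult_nonpos_nonneg)
      qed (simp add: p_eq_0_outside)
    qed (use k strict[OF s] bound[OF s] pnonneg in
        \<open>auto simp: \<Delta>_def continuous_on_residual continuous_on_p\<close>)
    ultimately show ?thesis
      by (simp add: power_mult_distrib algebra_simps)
  qed
  moreover have "((\<lambda>t. LL a b h v w f p (\<theta>(j := t))) has_real_derivative 0) (at (\<theta> j))"
    using crit j unfolding grad_zero_def by blast
  moreover have "2 * m * (k2 - k1) > 0"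
    using m k by simp
  ultimately show False
    using deriv_zero_not_linear_descent[where \<phi> = "\<lambda>t. LL a b h v w f p (\<theta>(j := t))" and t = "\<theta> j"
        and c = "2 * m * (k2 - k1)" and \<delta> = s0 and \<sigma> = \<sigma> and K = "C\<^sup>2 * P"] s0 by auto
qed

lemma exists_signed_residual_nonpos:
  assumes \<sigma>: "\<bar>\<sigma>\<bar> = 1"
  shows "\<exists>y\<in>{a<..<b}. \<sigma> * residual y \<le> 0"
proof (rule ccontr)
  assume "\<not> ?thesis"
  then have pos: "\<sigma> * residual x > 0" if "x \<in> {a<..<b}" for x
    using that by force
  define y0 where "y0 = (a + b) / 2"
  have y0: "y0 \<in> {a<..<b}"
    using ab by (simp add: y0_def)
  obtain k1 k2 m where k: "k1 < k2" "{k1..k2} \<subseteq> {a<..<b}" and m: "m > 0"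
    and q: "\<And>x. x \<in> {k1..k2} \<Longrightarrow> m \<le> \<sigma> * residual x * p x"
    using signed_residual_interval[OF open_greaterThanLessThan order_refl y0 pos[OF y0]] by blast
  show False
  proof (rule no_first_order_descent[of "h + 1" 1 k1 k2 m "- \<sigma>" 1])
    show "{k1..k2} \<subseteq> {a..b}"
      using k(2) by (rule order_trans) auto
  next
    fix s x assume s: "s \<in> {0<..<1::real}"
    have incr: "NN h v w (\<theta>(h + 1 := \<theta> (h + 1) + - \<sigma> * s)) x - NN h v w \<theta> x = - \<sigma> * s"
      unfolding NN_fun_upd_bias by simp
    show "residual x * (NN h v w (\<theta>(h + 1 := \<theta> (h + 1) + - \<sigma> * s)) x - NN h v w \<theta> x) \<le> 0"
      if "x \<in> {a<..<b}"
    proof -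
      have "0 < s * (\<sigma> * residual x)"
        using s pos[OF that] by simp
      moreover have "residual x * (- \<sigma> * s) = - (s * (\<sigma> * residual x))"
        by (simp add: algebra_simps)
      ultimately show ?thesis
        unfolding incr by linarith
    qed
    show "residual x * (NN h v w (\<theta>(h + 1 := \<theta> (h + 1) + - \<sigma> * s)) x - NN h v w \<theta> x) * p x
        \<le> - m * s"
      if "x \<in> {k1..k2}"
      using mult_left_mono[OF q[OF that], of s] s unfolding incr by (simp add: algebra_simps)
    show "\<bar>NN h v w (\<theta>(h + 1 := \<theta> (h + 1) + - \<sigma> * s)) x - NN h v w \<theta> x\<bar> \<le> 1 * s"
      using s \<sigma> unfolding incr by (simp add: abs_mult)
  qed (use k m in auto)
qed

lemma neuron_no_descent:
  assumes i: "i \<in> {1..h}" and \<sigma>: "\<bar>\<sigma>\<bar> = 1"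
    and y0: "y0 \<in> Iset a b w \<theta> i" and pos: "\<sigma> * residual y0 > 0"
    and sign: "\<And>s x. s > 0 \<Longrightarrow> x \<in> {a<..<b} \<Longrightarrow>
      residual x * (clip (w i * x + \<theta> i - \<sigma> * s) - clip (w i * x + \<theta> i)) \<le> 0"
  shows False
proof -
  have wi: "w i > 0" and vi: "v i > 0"
    using i wpos vpos by auto
  have incr: "NN h v w (\<theta>(i := \<theta> i + - \<sigma> * s)) x - NN h v w \<theta> x
      = v i * (clip (w i * x + \<theta> i - \<sigma> * s) - clip (w i * x + \<theta> i))" for s x
    by (simp add: NN_fun_upd_neuron[OF i] algebra_simps)
  obtain k1 k2 m where k: "k1 < k2" "{k1..k2} \<subseteq> Iset a b w \<theta> i" and m: "m > 0"
    and q: "\<And>x. x \<in> {k1..k2} \<Longrightarrow> m \<le> \<sigma> * residual x * p x"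
    using signed_residual_interval[OF open_Iset Iset_subset y0 pos] by blast
  have inside: "x \<in> {a<..<b} \<and> 0 < w i * x + \<theta> i \<and> w i * x + \<theta> i < 1" if "x \<in> {k1..k2}" for x
    using k(2) that mem_Iset_iff[of w i, OF wi] by blast
  have k_ab: "{k1..k2} \<subseteq> {a..b}"
    using inside[of k1] inside[of k2] k(1) by auto
  define s0 where "s0 = min (w i * k1 + \<theta> i) (1 - (w i * k2 + \<theta> i))"
  have s0: "s0 > 0"
    unfolding s0_def using inside[of k1] inside[of k2] k(1) by auto
  have linear: "clip (w i * x + \<theta> i - \<sigma> * s) - clip (w i * x + \<theta> i) = - \<sigma> * s"
    if x: "x \<in> {k1..k2}" and s: "s \<in> {0<..<s0}" for x s
  proof -
    have "w i * k1 \<le> w i * x" "w i * x \<le> w i * k2"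
      using x wi by auto
    moreover have "\<sigma> = 1 \<or> \<sigma> = -1"
      using \<sigma> by (auto simp: abs_if split: if_splits)
    ultimately show ?thesis
      using inside[OF x] s unfolding s0_def by (auto simp: clip_eq_self)
  qed
  show False
  proof (rule no_first_order_descent[of i s0 k1 k2 "v i * m" "- \<sigma>" "v i"])
    fix s x assume s: "s \<in> {0<..<s0}"
    show "residual x * (NN h v w (\<theta>(i := \<theta> i + - \<sigma> * s)) x - NN h v w \<theta> x) \<le> 0"
      if "x \<in> {a<..<b}"
      using sign[of s x] s that vi unfolding incr
      by (simp add: mult.left_commute[of "residual x"] mult_nonneg_nonpos)
    show "residual x * (NN h v w (\<theta>(i := \<theta> i + - \<sigma> * s)) x - NN h v w \<theta> x) * p x
        \<le> - (v i * m) * s"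
      if x: "x \<in> {k1..k2}"
      using mult_left_mono[OF q[OF x], of "v i * s"] s vi unfolding incr linear[OF x s]
      by (simp add: algebra_simps)
    show "\<bar>NN h v w (\<theta>(i := \<theta> i + - \<sigma> * s)) x - NN h v w \<theta> x\<bar> \<le> v i * s"
      using clip_lipschitz[of "w i * x + \<theta> i - \<sigma> * s" "w i * x + \<theta> i"] s vi \<sigma>
      unfolding incr by (simp add: abs_mult)
  qed (use i s0 k k_ab m vi in auto)
qed

lemma exists_residual_nonpos_right_of_psi:
  assumes i: "i \<in> {1..h}" and active: "Iset a b w \<theta> i \<noteq> {}"
  shows "\<exists>y\<in>{a<..<b}. psi w \<theta> i < y \<and> residual y \<le> 0"
proof (rule ccontr)
  assume "\<not> ?thesis"
  then have pos: "residual x > 0" if "x \<in> {a<..<b}" "psi w \<theta> i < x" for x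
    using that by force
  have wi: "w i > 0"
    using i wpos by auto
  obtain y0 where y0: "y0 \<in> Iset a b w \<theta> i"
    using active by blast
  have "residual x * (clip (w i * x + \<theta> i - s) - clip (w i * x + \<theta> i)) \<le> 0"
    if s: "s > 0" and x: "x \<in> {a<..<b}" for s x
  proof (cases "psi w \<theta> i < x")
    case True
    have "clip (w i * x + \<theta> i - s) \<le> clip (w i * x + \<theta> i)"
      using s by (intro clip_mono) simp
    then show ?thesis
      using pos[OF x True] by (simp add: mult_nonneg_nonpos)
  next
    case False
    then show ?thesis
      using s psi_less_iff[of w i \<theta> x, OF wi] by (simp add: clip_eq_0)
  qed
  moreover have "residual y0 > 0"
    using pos y0 by (auto simp: Iset_def)
  ultimately show False
    by (intro neuron_no_descent[OF i _ y0, where \<sigma> = 1]) auto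
qed

lemma exists_residual_nonneg_left_of_psi:
  assumes i: "i \<in> {1..h}" and active: "Iset a b w \<theta> i \<noteq> {}"
  shows "\<exists>y\<in>{a<..<b}. y < psi w \<theta> i + 1 / w i \<and> residual y \<ge> 0"
proof (rule ccontr)
  assume "\<not> ?thesis"
  then have neg: "residual x < 0" if "x \<in> {a<..<b}" "x < psi w \<theta> i + 1 / w i" for x
    using that by force
  have wi: "w i > 0"
    using i wpos by auto
  obtain y0 where y0: "y0 \<in> Iset a b w \<theta> i"
    using active by blast
  have "residual x * (clip (w i * x + \<theta> i + s) - clip (w i * x + \<theta> i)) \<le> 0"
    if s: "s > 0" and x: "x \<in> {a<..<b}" for s x
  proof (cases "x < psi w \<theta> i + 1 / w i")
    case True
    have "clip (w i * x + \<theta> i) \<le> clip (w i * x + \<theta> i + s)"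
      using s by (intro clip_mono) simp
    then show ?thesis
      using neg[OF x True] by (simp add: mult_nonpos_nonneg)
  next
    case False
    then show ?thesis
      using s less_psi_add_iff[of w i x \<theta>, OF wi] by (simp add: clip_eq_1)
  qed
  moreover have "residual y0 < 0"
    using neg y0 by (auto simp: Iset_def)
  ultimately show False
    by (intro neuron_no_descent[OF i _ y0, where \<sigma> = "-1"]) auto
qed

lemma exists_residual_nonpos_right_of_active:
  "\<exists>y\<in>{a<..<b}. residual y \<le> 0 \<and> (\<forall>j\<in>{1..h}. Iset a b w \<theta> j \<noteq> {} \<longrightarrow> psi w \<theta> j < y)"
proof (cases "\<exists>j\<in>{1..h}. Iset a b w \<theta> j \<noteq> {}")
  case False
  then show ?thesis
    using exists_signed_residual_nonpos[of 1] by auto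
next
  case True
  define J where "J = {j \<in> {1..h}. Iset a b w \<theta> j \<noteq> {}}"
  have J: "finite J" "J \<noteq> {}"
    using True by (auto simp: J_def)
  then have "Max (psi w \<theta> ` J) \<in> psi w \<theta> ` J"
    by (intro Max_in) auto
  then obtain i where i: "i \<in> J" "psi w \<theta> i = Max (psi w \<theta> ` J)"
    by (metis imageE)
  have "i \<in> {1..h}" "Iset a b w \<theta> i \<noteq> {}"
    using i(1) by (auto simp: J_def)
  then obtain y where y: "y \<in> {a<..<b}" "psi w \<theta> i < y" "residual y \<le> 0"
    using exists_residual_nonpos_right_of_psi by blast
  have "psi w \<theta> j < y" if "j \<in> J" for j
  proof -
    have "psi w \<theta> j \<le> psi w \<theta> i"
      using Max_ge[of "psi w \<theta> ` J" "psi w \<theta> j"] J(1) that i(2) by simp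
    then show ?thesis
      using y(2) by linarith
  qed
  then show ?thesis
    using y unfolding J_def by blast
qed

lemma exists_residual_nonneg_left_of_active:
  "\<exists>y\<in>{a<..<b}. residual y \<ge> 0 \<and> (\<forall>j\<in>{1..h}. Iset a b w \<theta> j \<noteq> {} \<longrightarrow> y < psi w \<theta> j + 1 / w j)"
proof (cases "\<exists>j\<in>{1..h}. Iset a b w \<theta> j \<noteq> {}")
  case False
  then show ?thesis
    using exists_signed_residual_nonpos[of "-1"] by auto
next
  case True
  define r where "r j = psi w \<theta> j + 1 / w j" for j
  define J where "J = {j \<in> {1..h}. Iset a b w \<theta> j \<noteq> {}}"
  have J: "finite J" "J \<noteq> {}"
    using True by (auto simp: J_def)
  then have "Min (r ` J) \<in> r ` J"
    by (intro Min_in) auto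
  then obtain i where i: "i \<in> J" "r i = Min (r ` J)"
    by (metis imageE)
  have "i \<in> {1..h}" "Iset a b w \<theta> i \<noteq> {}"
    using i(1) by (auto simp: J_def)
  then obtain y where y: "y \<in> {a<..<b}" "y < r i" "residual y \<ge> 0"
    using exists_residual_nonneg_left_of_psi unfolding r_def by blast
  have "y < r j" if "j \<in> J" for j
  proof -
    have "r i \<le> r j"
      using Min_le[of "r ` J" "r j"] J(1) that i(2) by simp
    then show ?thesis
      using y(2) by linarith
  qed
  then show ?thesis
    using y unfolding J_def r_def by blast
qed

end

theorem corollary2p13:
  fixes a b :: real and h :: nat and v w :: "nat \<Rightarrow> real"
    and f p :: "real \<Rightarrow> real" and \<theta> :: "nat \<Rightarrow> real"
  assumes ab: "a < b"
    and h: "h \<ge> 1"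
    and vpos: "\<forall>i \<in> {1..h}. v i > 0"
    and wpos: "\<forall>i \<in> {1..h}. w i > 0"
    and fcont: "continuous_on UNIV f"
    and pcont: "continuous_on UNIV p"
    and pnonneg: "\<forall>x. p x \<ge> 0"
    and psupp: "{x. p x > 0} = {a<..<b}"
    and fmono: "mono f"
    and flip: "Lip a b f < ereal (Min ((\<lambda>i. v i * w i) ` {1..h}))"
    and crit: "grad_zero h (LL a b h v w f p) \<theta>"
  shows "max (NN h v w \<theta> b - f b) (f a - NN h v w \<theta> a)
           \<le> (SUP x \<in> {a<..<b}. (\<Sum>i \<in> {i \<in> {1..h}. x \<in> Iset a b w \<theta> i}. v i))"
proof -
  interpret loss_critical_point a b h v w f p \<theta>
    using ab vpos wpos fcont pcont pnonneg psupp crit by unfold_locales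
  define V where "V x = (\<Sum>i \<in> {i \<in> {1..h}. x \<in> Iset a b w \<theta> i}. v i)" for x
  have bdd: "bdd_above (V ` {a<..<b})"
    by (rule bdd_aboveI2[of _ _ "\<Sum>i = 1..h. v i"])
      (use vpos in \<open>auto simp: V_def less_imp_le intro!: sum_mono2\<close>)
  obtain y1 where y1: "y1 \<in> {a<..<b}" "residual y1 \<le> 0"
    "\<forall>j\<in>{1..h}. Iset a b w \<theta> j \<noteq> {} \<longrightarrow> psi w \<theta> j < y1"
    using exists_residual_nonpos_right_of_active by blast
  obtain y2 where y2: "y2 \<in> {a<..<b}" "residual y2 \<ge> 0"
    "\<forall>j\<in>{1..h}. Iset a b w \<theta> j \<noteq> {} \<longrightarrow> y2 < psi w \<theta> j + 1 / w j"
    using exists_residual_nonneg_left_of_active by blast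
  have "f y1 \<le> f b" "f a \<le> f y2"
    using y1(1) y2(1) by (auto intro: monoD[OF fmono])
  then have "NN h v w \<theta> b - f b \<le> V y1" "f a - NN h v w \<theta> a \<le> V y2"
    using NN_rise_right_le[OF vpos wpos y1(1,3)] NN_rise_left_le[OF vpos wpos y2(1,3)] y1(2) y2(2)
    unfolding V_def residual_def by linarith+
  moreover have "V y1 \<le> (SUP x \<in> {a<..<b}. V x)" "V y2 \<le> (SUP x \<in> {a<..<b}. V x)"
    using cSUP_upper[OF y1(1) bdd] cSUP_upper[OF y2(1) bdd] by auto
  ultimately show ?thesis
    unfolding V_def by simp
qed

end
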